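(* Let $H$ and $H'$ be uniform hypertrees (each $s$-uniform for some $s\ge2$) with $X_H=X_{H'}$. Then $H$ and $H'$ have the same degree sequence; that is, the degree sequence of a uniform hypertree is determined by its chromatic symmetric function.
   Context: A hypergraph $H=(V,E)$ has $V$ finite and $E$ a set of subsets of $V$ of size at least $2$; it is $s$-uniform if all hyperedges have size $s$. A walk is a sequence $(v_1,e_1,\dots,v_\ell,e_\ell,v_{\ell+1})$, $\ell>0$, with $v_i,v_{i+1}\in e_i\in E$; a path has all vertices and hyperedges distinct; a cycle has $\ell\ge2$ and all vertices and hyperedges distinct except $v_1=v_{\ell+1}$. A hypertree is a connected (any two vertices joined by a path) hypergraph with no cycles. The chromatic symmetric function is $X_H=\sum_f\prod_{v\in V}x_{f(v)}$ in commuting variables $x_1,x_2,\dots$, summed over all $f:V\to\{1,2,\dots\}$ under which no hyperedge is monochromatic. The degree of $v$ is $|\{e\in E: v\in e\}|$, and the degree sequence is the multiset of all vertex degrees listed in weakly decreasing order. *)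

theory Defs
  imports Main "HOL-Library.FuncSet" "HOL-Library.Multiset"
begin

definition hypergraph :: "'a set \<Rightarrow> 'a set set \<Rightarrow> bool" where
  "hypergraph V E \<longleftrightarrow> finite V \<and> (\<forall>e\<in>E. e \<subseteq> V \<and> card e \<ge> 2)"

definition uniform :: "nat \<Rightarrow> 'a set set \<Rightarrow> bool" where
  "uniform s E \<longleftrightarrow> (\<forall>e\<in>E. card e = s)"

definition is_walk :: "'a set set \<Rightarrow> 'a list \<Rightarrow> 'a set list \<Rightarrow> bool" where
  "is_walk E vs es \<longleftrightarrow> es \<noteq> [] \<and> length vs = Suc (length es) \<and>
     (\<forall>i<length es. es ! i \<in> E \<and> vs ! i \<in> es ! i \<and> vs ! Suc i \<in> es ! i)"

definition is_path :: "'a set set \<Rightarrow> 'a list \<Rightarrow> 'a set list \<Rightarrow> bool" where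
  "is_path E vs es \<longleftrightarrow> is_walk E vs es \<and> distinct vs \<and> distinct es"

definition is_cycle :: "'a set set \<Rightarrow> 'a list \<Rightarrow> 'a set list \<Rightarrow> bool" where
  "is_cycle E vs es \<longleftrightarrow> is_walk E vs es \<and> length es \<ge> 2 \<and>
     distinct (butlast vs) \<and> distinct es \<and> hd vs = last vs"

definition connected_hg :: "'a set \<Rightarrow> 'a set set \<Rightarrow> bool" where
  "connected_hg V E \<longleftrightarrow> (\<forall>u\<in>V. \<forall>v\<in>V. u \<noteq> v \<longrightarrow>
     (\<exists>vs es. is_path E vs es \<and> hd vs = u \<and> last vs = v))"

definition hypertree :: "'a set \<Rightarrow> 'a set set \<Rightarrow> bool" where
  "hypertree V E \<longleftrightarrow> hypergraph V E \<and> connected_hg V E \<and> \<not> (\<exists>vs es. is_cycle E vs es)"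

definition proper_colouring :: "'a set set \<Rightarrow> ('a \<Rightarrow> nat) \<Rightarrow> bool" where
  "proper_colouring E f \<longleftrightarrow> (\<forall>e\<in>E. \<not> (\<exists>c. \<forall>v\<in>e. f v = c))"

text \<open>The chromatic symmetric function X_H, represented by its coefficient function:
  the coefficient of the monomial prod_i x_i^(alpha i) is the number of proper colourings
  f : V \<rightarrow> colours with exactly alpha i vertices of colour i.  (Colours are indexed by nat.)\<close>
definition csf :: "'a set \<Rightarrow> 'a set set \<Rightarrow> (nat \<Rightarrow> nat) \<Rightarrow> nat" where
  "csf V E \<alpha> = card {f \<in> V \<rightarrow>\<^sub>E (UNIV :: nat set). proper_colouring E f \<and>
        (\<forall>i. card {v\<in>V. f v = i} = \<alpha> i)}"

definition degree :: "'a set set \<Rightarrow> 'a \<Rightarrow> nat" where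
  "degree E v = card {e\<in>E. v \<in> e}"

definition degree_sequence :: "'a set \<Rightarrow> 'a set set \<Rightarrow> nat list" where
  "degree_sequence V E = rev (sorted_list_of_multiset (image_mset (degree E) (mset_set V)))"

end

(*
  For a uniform hyperforest, removing leaf edges one at a time shows that its chromatic polynomial
  is k^c (k^(s-1) - 1)^m, where m is the number of edges and c = |V| - (s-1) m.  This polynomial is
  read off X_H, and it determines c, m and (if m > 0) s.

  The number of proper colourings with colours 0..k in which colour k is used exactly once is read
  off X_H as well.  Sorting these colourings by the vertex v of colour k gives the sum over v of the
  chromatic polynomial of H with v and its edges deleted, that is
  k^(c-1) * (sum over v of t^(deg v) (t-1)^(m - deg v)) with t = k^(s-1).  Dividing by
  k^(c-1) (t-1)^m yields the power sums of the degrees at y = t/(t-1), for infinitely many y, and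
  these determine the multiset of degrees.
*)
theory Submission
  imports Defs "HOL-Computational_Algebra.Polynomial"
begin

section \<open>Hyperforests and their leaf edges\<close>

definition hyperforest :: "'a set \<Rightarrow> 'a set set \<Rightarrow> bool" where
  "hyperforest V E \<longleftrightarrow> hypergraph V E \<and> \<not> (\<exists>vs es. is_cycle E vs es)"

lemma hypertree_imp_hyperforest: "hypertree V E \<Longrightarrow> hyperforest V E"
  by (simp add: hypertree_def hyperforest_def)

lemma hyperforest_finite_edges: "hyperforest V E \<Longrightarrow> finite E"
  unfolding hyperforest_def hypergraph_def by (meson PowI finite_Pow_iff finite_subset subsetI)

lemma ex_neq_if_card_ge_2: "card e \<ge> 2 \<Longrightarrow> x \<in> e \<Longrightarrow> \<exists>y\<in>e. y \<noteq> x"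
proof (rule ccontr)
  assume "card e \<ge> 2" "x \<in> e" "\<not> (\<exists>y\<in>e. y \<noteq> x)"
  then have "e = {x}" by blast
  with \<open>card e \<ge> 2\<close> show False by simp
qed

lemma is_cycle_mono: "is_cycle E' vs es \<Longrightarrow> E' \<subseteq> E \<Longrightarrow> is_cycle E vs es"
  unfolding is_cycle_def is_walk_def by blast

lemma hyperforest_subgraph:
  assumes "hyperforest V E" "V' \<subseteq> V" "E' \<subseteq> E" "\<forall>e\<in>E'. e \<subseteq> V'"
  shows "hyperforest V' E'"
proof -
  have "finite V'" using assms(1,2) finite_subset by (auto simp: hyperforest_def hypergraph_def)
  moreover have "\<forall>e\<in>E'. card e \<ge> 2"
    using assms(1,3) by (auto simp: hyperforest_def hypergraph_def)
  moreover have "\<not> (\<exists>vs es. is_cycle E' vs es)"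
    using assms(1,3) is_cycle_mono[of E' _ _ E] by (auto simp: hyperforest_def)
  ultimately show ?thesis using assms(4) by (simp add: hyperforest_def hypergraph_def)
qed

lemma path_chord_imp_cycle:
  assumes P: "is_path E vs es" and ij: "i < j" "j < length vs"
    and g: "g \<in> E" "g \<notin> set (drop i (take j es))" "vs ! i \<in> g" "vs ! j \<in> g"
  shows "\<exists>vs es. is_cycle E vs es"
proof -
  have dv: "distinct vs" and de: "distinct es" and len: "length vs = Suc (length es)"
    and step: "\<And>t. t < length es \<Longrightarrow> es ! t \<in> E \<and> vs ! t \<in> es ! t \<and> vs ! Suc t \<in> es ! t"
    using P by (auto simp: is_path_def is_walk_def)
  define seg where "seg = drop i (take j es)"
  define sv where "sv = drop i (take (Suc j) vs)"
  have lseg: "length seg = j - i" and lsv: "length sv = Suc (j - i)"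
    using ij len by (auto simp: seg_def sv_def)
  have seg_nth: "t < j - i \<Longrightarrow> seg ! t = es ! (i + t)" for t
    using ij len by (simp add: seg_def)
  have sv_nth: "t \<le> j - i \<Longrightarrow> sv ! t = vs ! (i + t)" for t
    using ij len by (simp add: sv_def)
  have "is_cycle E (sv @ [vs ! i]) (seg @ [g])"
    unfolding is_cycle_def is_walk_def
  proof (intro conjI)
    show "\<forall>t<length (seg @ [g]). (seg @ [g]) ! t \<in> E \<and> (sv @ [vs ! i]) ! t \<in> (seg @ [g]) ! t
          \<and> (sv @ [vs ! i]) ! Suc t \<in> (seg @ [g]) ! t"
    proof (intro allI impI)
      fix t assume t: "t < length (seg @ [g])"
      show "(seg @ [g]) ! t \<in> E \<and> (sv @ [vs ! i]) ! t \<in> (seg @ [g]) ! t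
            \<and> (sv @ [vs ! i]) ! Suc t \<in> (seg @ [g]) ! t"
      proof (cases "t < j - i")
        case True
        then show ?thesis
          using step[of "i + t"] ij len lseg lsv seg_nth sv_nth[of t] sv_nth[of "Suc t"]
          by (simp add: nth_append)
      next
        case False
        then have "t = j - i" using t lseg by simp
        then show ?thesis using g lseg lsv sv_nth[of t] ij by (simp add: nth_append)
      qed
    qed
    show "distinct (butlast (sv @ [vs ! i]))"
      using dv by (simp add: sv_def distinct_drop distinct_take)
    show "distinct (seg @ [g])"
      using de g(2) by (simp add: seg_def distinct_drop distinct_take)
    show "hd (sv @ [vs ! i]) = last (sv @ [vs ! i])"
      using lsv sv_nth[of 0] by (simp add: hd_conv_nth nth_append)
    show "length (sv @ [vs ! i]) = Suc (length (seg @ [g]))" "2 \<le> length (seg @ [g])"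
      using lseg lsv ij by simp_all
  qed simp
  then show ?thesis by blast
qed

lemma path_length_le_card_edges:
  assumes "finite E" "is_path E vs es"
  shows "length es \<le> card E"
proof -
  have "set es \<subseteq> E" and "distinct es"
    using assms(2) by (auto simp: is_path_def is_walk_def in_set_conv_nth)
  then show ?thesis using card_mono[OF assms(1)] distinct_card by metis
qed

lemma ex_longest_path:
  assumes "finite E" "is_path E vs es"
  shows "\<exists>vs es. is_path E vs es \<and> (\<forall>vs' es'. is_path E vs' es' \<longrightarrow> length es' \<le> length es)"
proof -
  let ?P = "\<lambda>n. \<exists>vs es. is_path E vs es \<and> length es = n"
  obtain n where "?P n" and "\<forall>n'. ?P n' \<longrightarrow> n' \<le> n"
    using Nat.ex_has_greatest_nat[of ?P "length es" "card E"] assms path_length_le_card_edges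
    by blast
  then show ?thesis by blast
qed

text \<open>Another edge through the first vertex would either close a cycle with the path or extend it.\<close>
lemma longest_path_start_in_unique_edge:
  assumes "hyperforest V E" and P: "is_path E vs es"
    and longest: "\<And>vs' es'. is_path E vs' es' \<Longrightarrow> length es' \<le> length es"
    and f: "f \<in> E" "hd vs \<in> f"
  shows "f = hd es"
proof (rule ccontr)
  assume fne: "f \<noteq> hd es"
  have acyc: "\<not> (\<exists>vs es. is_cycle E vs es)" and c2: "card f \<ge> 2"
    using assms(1) f by (auto simp: hyperforest_def hypergraph_def)
  have esne: "es \<noteq> []" and len: "length vs = Suc (length es)" and de: "distinct es"
    and step: "\<And>t. t < length es \<Longrightarrow> es ! t \<in> E \<and> vs ! t \<in> es ! t \<and> vs ! Suc t \<in> es ! t"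
    using P by (auto simp: is_path_def is_walk_def)
  have hd0: "hd vs = vs ! 0" using len by (cases vs) auto
  show False
  proof (cases "f \<in> set es")
    case True
    then obtain i where i: "i < length es" "es ! i = f" by (auto simp: in_set_conv_nth)
    have "0 < i" using i fne esne by (cases i) (auto simp: hd_conv_nth)
    moreover have "f \<notin> set (drop 0 (take i es))"
      using de i by (auto simp: in_set_conv_nth nth_eq_iff_index_eq)
    moreover have "i < length vs" "vs ! 0 \<in> f" "vs ! i \<in> f"
      using i step[of i] len f hd0 by auto
    ultimately show False
      using path_chord_imp_cycle[OF P, of 0 i f] f(1) acyc by blast
  next
    case False
    obtain z where z: "z \<in> f" "z \<noteq> hd vs" using ex_neq_if_card_ge_2[OF c2 f(2)] by blast
    show False
    proof (cases "z \<in> set vs")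
      case True
      then obtain j where j: "j < length vs" "vs ! j = z" by (auto simp: in_set_conv_nth)
      have "0 < j" using j z hd0 by (cases j) auto
      then show False
        using path_chord_imp_cycle[OF P _ j(1) f(1)] False j z f hd0 acyc
        by (auto dest: in_set_takeD in_set_dropD)
    next
      case z_new: False
      have "is_path E (z # vs) (f # es)"
        using P z_new False z f hd0 len
        unfolding is_path_def is_walk_def by (auto simp: nth_Cons split: nat.split)
      then show False using longest by fastforce
    qed
  qed
qed

text \<open>The first edge of a longest path works, with x its second vertex: starting the path at any
  other vertex of that edge instead gives another longest path.\<close>
lemma hyperforest_ex_leaf_edge:
  assumes forest: "hyperforest V E" and "E \<noteq> {}"
  shows "\<exists>e\<in>E. \<exists>x\<in>e. \<forall>w\<in>e - {x}. \<forall>f\<in>E. w \<in> f \<longrightarrow> f = e"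
proof -
  have fin: "finite E" and acyc: "\<not> (\<exists>vs es. is_cycle E vs es)"
    using forest hyperforest_finite_edges by (auto simp: hyperforest_def)
  obtain e where "e \<in> E" using \<open>E \<noteq> {}\<close> by blast
  then have "card e \<ge> 2" using forest by (auto simp: hyperforest_def hypergraph_def)
  then obtain x y where "x \<in> e" "y \<in> e" "x \<noteq> y"
    using ex_neq_if_card_ge_2 by (metis card.empty ex_in_conv not_numeral_le_zero)
  with \<open>e \<in> E\<close> have "is_path E [x, y] [e]" by (auto simp: is_path_def is_walk_def)
  then obtain vs es where P: "is_path E vs es"
    and longest: "\<And>vs' es'. is_path E vs' es' \<Longrightarrow> length es' \<le> length es"
    using ex_longest_path[OF fin] by blast
  have len: "length vs = Suc (length es)" and esne: "es \<noteq> []"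
    and step: "\<And>t. t < length es \<Longrightarrow> es ! t \<in> E \<and> vs ! t \<in> es ! t \<and> vs ! Suc t \<in> es ! t"
    using P by (auto simp: is_path_def is_walk_def)
  have e0: "hd es \<in> E" "vs ! 1 \<in> hd es" using step[of 0] esne by (auto simp: hd_conv_nth)
  have "\<forall>f\<in>E. w \<in> f \<longrightarrow> f = hd es" if w: "w \<in> hd es - {vs ! 1}" for w
  proof -
    have w_new: "w \<notin> set (tl vs)"
    proof
      assume "w \<in> set (tl vs)"
      then obtain j where j: "Suc j < length vs" "vs ! Suc j = w"
        using len by (auto simp: in_set_conv_nth nth_tl)
      then have "1 < Suc j" using w by (cases j) auto
      moreover have "hd es \<notin> set (drop 1 (take (Suc j) es))"
        using P esne by (cases es) (auto simp: is_path_def dest: in_set_takeD)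
      ultimately show False
        using path_chord_imp_cycle[OF P _ j(1) e0(1)] j w e0 acyc by auto
    qed
    have Q: "is_path E (w # tl vs) es"
      using P w w_new e0 len esne step
      unfolding is_path_def is_walk_def
      by (cases vs) (auto simp: nth_Cons hd_conv_nth split: nat.split)
    show ?thesis
      using longest_path_start_in_unique_edge[OF forest Q longest] by simp
  qed
  then show ?thesis using e0 by blast
qed

section \<open>The chromatic polynomial of a uniform hyperforest\<close>

definition chromatic_poly :: "'a set \<Rightarrow> 'a set set \<Rightarrow> nat \<Rightarrow> nat" where
  "chromatic_poly V E k = card {f \<in> V \<rightarrow>\<^sub>E {..<k}. proper_colouring E f}"

lemma proper_colouring_cong:
  "(\<And>e v. e \<in> E \<Longrightarrow> v \<in> e \<Longrightarrow> f v = g v) \<Longrightarrow> proper_colouring E f \<longleftrightarrow> proper_colouring E g"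
  unfolding proper_colouring_def by (intro ball_cong refl) auto

lemma chromatic_poly_no_edges: "finite V \<Longrightarrow> chromatic_poly V {} k = k ^ card V"
  by (simp add: chromatic_poly_def proper_colouring_def card_PiE)

lemma card_nonconstant_maps:
  assumes "finite W" "c < k"
  shows "card {h \<in> W \<rightarrow>\<^sub>E {..<k}. \<not> (\<forall>w\<in>W. h w = c)} = k ^ card W - 1"
proof -
  have "{h \<in> W \<rightarrow>\<^sub>E {..<k}. \<not> (\<forall>w\<in>W. h w = c)} = (W \<rightarrow>\<^sub>E {..<k}) - {\<lambda>w\<in>W. c}"
    by (auto simp: PiE_def extensional_def fun_eq_iff)
  moreover have "(\<lambda>w\<in>W. c) \<in> W \<rightarrow>\<^sub>E {..<k}" using assms by auto
  ultimately show ?thesis using assms by (simp add: card_Diff_singleton card_PiE)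
qed

text \<open>A proper colouring is a proper colouring of the rest together with a colouring of
  e - {x} that does not give all of e the colour of x.\<close>
lemma chromatic_poly_remove_leaf_edge:
  assumes fin: "finite V" and e: "e \<in> E" "x \<in> e" "e \<subseteq> V"
    and others: "\<forall>f\<in>E - {e}. f \<subseteq> V - (e - {x})"
  shows "chromatic_poly V E k = chromatic_poly (V - (e - {x})) (E - {e}) k * (k ^ (card e - 1) - 1)"
proof -
  define W where "W = e - {x}"
  define V' where "V' = V - W"
  define P' where "P' = {g \<in> V' \<rightarrow>\<^sub>E {..<k}. proper_colouring (E - {e}) g}"
  define B where "B g = {h \<in> W \<rightarrow>\<^sub>E {..<k}. \<not> (\<forall>w\<in>W. h w = g x)}" for g :: "'a \<Rightarrow> nat"
  have WV: "W \<subseteq> V" and xV': "x \<in> V'" and disj: "W \<inter> V' = {}"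
    using e by (auto simp: W_def V'_def)
  have "finite e" using fin e(3) by (rule finite_subset[rotated])
  have proper_iff: "proper_colouring E f \<longleftrightarrow>
      proper_colouring (E - {e}) (restrict f V') \<and> \<not> (\<forall>w\<in>W. f w = f x)" for f
  proof -
    have "proper_colouring (E - {e}) (restrict f V') \<longleftrightarrow> proper_colouring (E - {e}) f"
      using others by (intro proper_colouring_cong) (auto simp: V'_def W_def)
    moreover have "proper_colouring E f \<longleftrightarrow>
        proper_colouring (E - {e}) f \<and> \<not> (\<exists>c. \<forall>v\<in>e. f v = c)"
      using e(1) unfolding proper_colouring_def by auto
    moreover have "(\<exists>c. \<forall>v\<in>e. f v = c) \<longleftrightarrow> (\<forall>w\<in>W. f w = f x)"
      using e(2) by (auto simp: W_def)
    ultimately show ?thesis by simp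
  qed
  have bij: "bij_betw (\<lambda>f. (restrict f V', restrict f W))
      {f \<in> V \<rightarrow>\<^sub>E {..<k}. proper_colouring E f} (Sigma P' B)"
  proof (rule bij_betw_byWitness[where f' = "\<lambda>(g, h) v. if v \<in> V' then g v else h v"])
    show "\<forall>f\<in>{f \<in> V \<rightarrow>\<^sub>E {..<k}. proper_colouring E f}.
        (\<lambda>(g, h) v. if v \<in> V' then g v else h v) (restrict f V', restrict f W) = f"
      using WV by (auto simp: fun_eq_iff V'_def PiE_def extensional_def)
    show "\<forall>gh\<in>Sigma P' B. (\<lambda>f. (restrict f V', restrict f W))
        ((\<lambda>(g, h) v. if v \<in> V' then g v else h v) gh) = gh"
      using disj by (auto simp: P'_def B_def fun_eq_iff PiE_def extensional_def)
    show "(\<lambda>f. (restrict f V', restrict f W)) ` {f \<in> V \<rightarrow>\<^sub>E {..<k}. proper_colouring E f}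
        \<subseteq> Sigma P' B"
      using proper_iff xV' WV by (auto simp: P'_def B_def V'_def PiE_iff subset_iff)
    show "(\<lambda>(g, h) v. if v \<in> V' then g v else h v) ` Sigma P' B
        \<subseteq> {f \<in> V \<rightarrow>\<^sub>E {..<k}. proper_colouring E f}"
    proof clarify
      fix g h assume g: "g \<in> P'" and h: "h \<in> B g"
      let ?f = "\<lambda>v. if v \<in> V' then g v else h v"
      have "?f \<in> V \<rightarrow>\<^sub>E {..<k}" and "restrict ?f V' = g"
        using g h WV by (auto simp: P'_def B_def V'_def PiE_def extensional_def Pi_def fun_eq_iff)
      moreover have "\<not> (\<forall>w\<in>W. ?f w = ?f x)" using h xV' disj by (auto simp: B_def)
      ultimately show "?f \<in> V \<rightarrow>\<^sub>E {..<k} \<and> proper_colouring E ?f"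
        using g proper_iff by (simp add: P'_def)
    qed
  qed
  have "finite P'" unfolding P'_def using fin by (simp add: V'_def finite_PiE)
  then have "card (Sigma P' B) = (\<Sum>g\<in>P'. card (B g))"
    using \<open>finite e\<close> by (subst card_SigmaI) (auto simp: B_def W_def finite_PiE)
  also have "\<dots> = card P' * (k ^ card W - 1)"
  proof -
    have "card (B g) = k ^ card W - 1" if "g \<in> P'" for g
      unfolding B_def using that xV' \<open>finite e\<close>
      by (intro card_nonconstant_maps) (auto simp: P'_def W_def)
    then show ?thesis by simp
  qed
  finally show ?thesis
    using bij_betw_same_card[OF bij] e by (simp add: chromatic_poly_def P'_def V'_def W_def)
qed

lemma hyperforest_remove_leaf_edge:
  assumes forest: "hyperforest V E" and uni: "uniform s E" and "E \<noteq> {}"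
  obtains e x where "e \<in> E" "x \<in> V - (e - {x})" "hyperforest (V - (e - {x})) (E - {e})"
    "card V = card (V - (e - {x})) + (s - 1)"
    "\<And>k. chromatic_poly V E k = chromatic_poly (V - (e - {x})) (E - {e}) k * (k ^ (s - 1) - 1)"
proof -
  obtain e x where e: "e \<in> E" "x \<in> e" and leaf: "\<forall>w\<in>e - {x}. \<forall>f\<in>E. w \<in> f \<longrightarrow> f = e"
    using hyperforest_ex_leaf_edge[OF forest \<open>E \<noteq> {}\<close>] by blast
  have fin: "finite V" and eV: "e \<subseteq> V" and "card e = s" and "finite e"
    using forest uni e
    by (auto simp: hyperforest_def hypergraph_def uniform_def intro: finite_subset)
  have others: "\<forall>f\<in>E - {e}. f \<subseteq> V - (e - {x})"
    using forest leaf by (auto simp: hyperforest_def hypergraph_def)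
  show thesis
  proof
    show "e \<in> E" "x \<in> V - (e - {x})" using e eV by auto
    show "hyperforest (V - (e - {x})) (E - {e})"
      using others by (intro hyperforest_subgraph[OF forest]) auto
    have "card (e - {x}) = s - 1" using \<open>card e = s\<close> e(2) by simp
    then show "card V = card (V - (e - {x})) + (s - 1)"
      using card_Diff_subset[of "e - {x}" V] card_mono[of V "e - {x}"] eV fin \<open>finite e\<close>
      by (simp add: Diff_subset subset_trans[of _ e V])
    show "chromatic_poly V E k
        = chromatic_poly (V - (e - {x})) (E - {e}) k * (k ^ (s - 1) - 1)" for k
      using chromatic_poly_remove_leaf_edge[OF fin e eV others] \<open>card e = s\<close> by simp
  qed
qed

lemma hyperforest_card_edges_less:
  assumes "hyperforest V E" "uniform s E" "V \<noteq> {}"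
  shows "(s - 1) * card E < card V"
  using assms
proof (induction "card E" arbitrary: V E)
  case 0
  then show ?case
    by (auto simp: hyperforest_def hypergraph_def card_gt_0_iff)
next
  case (Suc m)
  then have "E \<noteq> {}" by auto
  then obtain e x where "e \<in> E" "x \<in> V - (e - {x})" "hyperforest (V - (e - {x})) (E - {e})"
    "card V = card (V - (e - {x})) + (s - 1)"
    "\<And>k. chromatic_poly V E k = chromatic_poly (V - (e - {x})) (E - {e}) k * (k ^ (s - 1) - 1)"
    by (rule hyperforest_remove_leaf_edge[OF Suc.prems(1,2)]) blast
  moreover have "uniform s (E - {e})" using Suc.prems(2) by (simp add: uniform_def)
  moreover have "card (E - {e}) = m" using Suc.hyps(2) \<open>e \<in> E\<close> by simp
  ultimately show ?case
    using Suc.hyps(1)[of "E - {e}" "V - (e - {x})"] Suc.hyps(2)[symmetric] by auto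
qed

lemma chromatic_poly_hyperforest:
  assumes "hyperforest V E" "uniform s E"
  shows "chromatic_poly V E k = k ^ (card V - (s - 1) * card E) * (k ^ (s - 1) - 1) ^ card E"
  using assms
proof (induction "card E" arbitrary: V E)
  case 0
  moreover have "finite E" using 0 hyperforest_finite_edges by blast
  ultimately have "E = {}" by simp
  then show ?case using 0 by (simp add: chromatic_poly_no_edges hyperforest_def hypergraph_def)
next
  case (Suc m)
  then have "E \<noteq> {}" by auto
  then obtain e x where "e \<in> E" "x \<in> V - (e - {x})" "hyperforest (V - (e - {x})) (E - {e})"
    "card V = card (V - (e - {x})) + (s - 1)"
    "\<And>k. chromatic_poly V E k = chromatic_poly (V - (e - {x})) (E - {e}) k * (k ^ (s - 1) - 1)"
    by (rule hyperforest_remove_leaf_edge[OF Suc.prems(1,2)]) blast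
  moreover have "uniform s (E - {e})" using Suc.prems(2) by (simp add: uniform_def)
  moreover have "card (E - {e}) = m" using Suc.hyps(2) \<open>e \<in> E\<close> by simp
  ultimately show ?case
    using Suc.hyps(1)[of "E - {e}" "V - (e - {x})"] Suc.hyps(2)[symmetric] by simp
qed

section \<open>Colouring counts determined by the chromatic symmetric function\<close>

definition colour_classes :: "'a set \<Rightarrow> ('a \<Rightarrow> nat) \<Rightarrow> nat \<Rightarrow> nat" where
  "colour_classes V f i = card {v \<in> V. f v = i}"

lemma csf_eq_card_colour_classes:
  "csf V E \<alpha> = card {f \<in> V \<rightarrow>\<^sub>E UNIV. proper_colouring E f \<and> colour_classes V f = \<alpha>}"
  unfolding csf_def colour_classes_def by (simp add: fun_eq_iff)

lemma PiE_iff_colour_classes: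
  assumes "finite V"
  shows "f \<in> V \<rightarrow>\<^sub>E A \<longleftrightarrow> f \<in> V \<rightarrow>\<^sub>E UNIV \<and> (\<forall>i. i \<notin> A \<longrightarrow> colour_classes V f i = 0)"
  using assms by (auto simp: colour_classes_def PiE_iff)

lemma card_proper_colourings_eq_sum_csf:
  assumes fin: "finite {f \<in> V \<rightarrow>\<^sub>E UNIV. proper_colouring E f \<and> P (colour_classes V f)}"
    and S: "finite S"
      "colour_classes V ` {f \<in> V \<rightarrow>\<^sub>E UNIV. proper_colouring E f \<and> P (colour_classes V f)} \<subseteq> S"
      "\<forall>\<alpha>\<in>S. P \<alpha>"
  shows "card {f \<in> V \<rightarrow>\<^sub>E UNIV. proper_colouring E f \<and> P (colour_classes V f)} = (\<Sum>\<alpha>\<in>S. csf V E \<alpha>)"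
proof -
  let ?F = "{f \<in> V \<rightarrow>\<^sub>E UNIV. proper_colouring E f \<and> P (colour_classes V f)}"
  have "card ?F = (\<Sum>\<alpha>\<in>S. card {f \<in> ?F. colour_classes V f = \<alpha>})"
    using sum.group[of ?F S "colour_classes V" "\<lambda>_. 1::nat"] fin S(1,2) by simp
  also have "\<dots> = (\<Sum>\<alpha>\<in>S. csf V E \<alpha>)"
    using S(3) unfolding csf_eq_card_colour_classes
    by (intro sum.cong refl arg_cong[where f = card]) auto
  finally show ?thesis .
qed

lemma card_colourings_eq_if_csf_eq:
  fixes V :: "'a set" and V' :: "'b set"
  assumes csf: "csf V E = csf V' E'" and fin: "finite V" "finite V'" "finite A"
  shows "card {f \<in> V \<rightarrow>\<^sub>E A. proper_colouring E f \<and> Q (colour_classes V f)}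
       = card {f \<in> V' \<rightarrow>\<^sub>E A. proper_colouring E' f \<and> Q (colour_classes V' f)}"
proof -
  define P where "P \<alpha> \<longleftrightarrow> (\<forall>i. i \<notin> A \<longrightarrow> \<alpha> i = 0) \<and> Q \<alpha>" for \<alpha> :: "nat \<Rightarrow> nat"
  define F where "F = {f \<in> V \<rightarrow>\<^sub>E UNIV. proper_colouring E f \<and> P (colour_classes V f)}"
  define F' where "F' = {f \<in> V' \<rightarrow>\<^sub>E UNIV. proper_colouring E' f \<and> P (colour_classes V' f)}"
  have F: "{f \<in> V \<rightarrow>\<^sub>E A. proper_colouring E f \<and> Q (colour_classes V f)} = F"
    using PiE_iff_colour_classes[OF fin(1), of _ A] by (auto simp: F_def P_def)
  have F': "{f \<in> V' \<rightarrow>\<^sub>E A. proper_colouring E' f \<and> Q (colour_classes V' f)} = F'"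
    using PiE_iff_colour_classes[OF fin(2), of _ A] by (auto simp: F'_def P_def)
  have "finite F" unfolding F[symmetric]
    by (rule finite_subset[of _ "V \<rightarrow>\<^sub>E A"]) (auto simp: fin finite_PiE)
  have "finite F'" unfolding F'[symmetric]
    by (rule finite_subset[of _ "V' \<rightarrow>\<^sub>E A"]) (auto simp: fin finite_PiE)
  define S where "S = colour_classes V ` F \<union> colour_classes V' ` F'"
  have S: "finite S" "\<forall>\<alpha>\<in>S. P \<alpha>"
    using \<open>finite F\<close> \<open>finite F'\<close> unfolding S_def F_def F'_def by blast+
  have "card F = (\<Sum>\<alpha>\<in>S. csf V E \<alpha>)"
    using \<open>finite F\<close> unfolding F_def
    by (rule card_proper_colourings_eq_sum_csf[OF _ S(1) _ S(2)]) (simp add: S_def F_def)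
  also have "\<dots> = card F'"
    using \<open>finite F'\<close> unfolding F'_def csf
    by (rule card_proper_colourings_eq_sum_csf[OF _ S(1) _ S(2), symmetric])
      (simp add: S_def F'_def)
  finally have "card F = card F'" .
  then show ?thesis using F F' by simp
qed

definition unique_top_colourings :: "'a set \<Rightarrow> 'a set set \<Rightarrow> nat \<Rightarrow> nat" where
  "unique_top_colourings V E k =
     card {f \<in> V \<rightarrow>\<^sub>E {..k}. proper_colouring E f \<and> colour_classes V f k = 1}"

lemma card_colourings_top_colour_at:
  assumes hg: "hypergraph V E" and v: "v \<in> V"
  shows "card {f \<in> V \<rightarrow>\<^sub>E {..k}. proper_colouring E f \<and> {u \<in> V. f u = k} = {v}}
       = chromatic_poly (V - {v}) {e \<in> E. v \<notin> e} k"
proof -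
  define P where "P = {g \<in> V - {v} \<rightarrow>\<^sub>E {..<k}. proper_colouring {e \<in> E. v \<notin> e} g}"
  have proper_upd: "proper_colouring E (g(v := k)) \<longleftrightarrow> proper_colouring {e \<in> E. v \<notin> e} g"
    if g: "g \<in> V - {v} \<rightarrow>\<^sub>E {..<k}" for g
  proof -
    have "\<not> (\<exists>c. \<forall>u\<in>e. (g(v := k)) u = c)" if "e \<in> E" "v \<in> e" for e
    proof -
      obtain u where "u \<in> e" "u \<noteq> v"
        using ex_neq_if_card_ge_2[of e v] hg \<open>e \<in> E\<close> \<open>v \<in> e\<close> unfolding hypergraph_def by blast
      then have "g u < k" using g hg \<open>e \<in> E\<close> by (auto simp: hypergraph_def PiE_iff)
      show ?thesis
      proof
        assume "\<exists>c. \<forall>u\<in>e. (g(v := k)) u = c"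
        then obtain c where "\<forall>u\<in>e. (g(v := k)) u = c" by blast
        then have "g u = c" "k = c" using \<open>u \<in> e\<close> \<open>v \<in> e\<close> \<open>u \<noteq> v\<close> by auto
        with \<open>g u < k\<close> show False by simp
      qed
    qed
    moreover have "proper_colouring {e \<in> E. v \<notin> e} (g(v := k)) \<longleftrightarrow>
        proper_colouring {e \<in> E. v \<notin> e} g"
      by (rule proper_colouring_cong) auto
    ultimately show ?thesis unfolding proper_colouring_def by blast
  qed
  have "inj_on (\<lambda>g. g(v := k)) P"
  proof (rule inj_onI)
    fix g h assume "g \<in> P" "h \<in> P" and upd: "g(v := k) = h(v := k)"
    have "g v = undefined" "h v = undefined"
      using \<open>g \<in> P\<close> \<open>h \<in> P\<close> unfolding P_def by (auto intro: PiE_arb)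
    show "g = h"
    proof
      fix u show "g u = h u"
        using fun_cong[OF upd, of u] \<open>g v = undefined\<close> \<open>h v = undefined\<close>
        by (cases "u = v") auto
    qed
  qed
  moreover have "(\<lambda>g. g(v := k)) ` P
      = {f \<in> V \<rightarrow>\<^sub>E {..k}. proper_colouring E f \<and> {u \<in> V. f u = k} = {v}}"
  proof (intro equalityI subsetI)
    fix f assume "f \<in> (\<lambda>g. g(v := k)) ` P"
    then obtain g where "g \<in> P" and f: "f = g(v := k)" by blast
    then have g: "g \<in> V - {v} \<rightarrow>\<^sub>E {..<k}" "proper_colouring {e \<in> E. v \<notin> e} g"
      by (simp_all add: P_def)
    have "g \<in> V - {v} \<rightarrow>\<^sub>E {..k}" using g(1) by (force simp: PiE_iff)
    then have "g(v := k) \<in> insert v (V - {v}) \<rightarrow>\<^sub>E {..k}" by (intro PiE_fun_upd) simp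
    then have "g(v := k) \<in> V \<rightarrow>\<^sub>E {..k}" using v by (simp add: insert_absorb)
    moreover have "{u \<in> V. (g(v := k)) u = k} = {v}" using g(1) v by (auto simp: PiE_iff)
    ultimately show "f \<in> {f \<in> V \<rightarrow>\<^sub>E {..k}. proper_colouring E f \<and> {u \<in> V. f u = k} = {v}}"
      using proper_upd[OF g(1)] g(2) f by simp
  next
    fix f assume f: "f \<in> {f \<in> V \<rightarrow>\<^sub>E {..k}. proper_colouring E f \<and> {u \<in> V. f u = k} = {v}}"
    then have "restrict f (V - {v}) \<in> V - {v} \<rightarrow>\<^sub>E {..<k}"
      and f_eq: "f = (restrict f (V - {v}))(v := k)"
      by (auto simp: PiE_iff fun_eq_iff le_less extensional_def)
    then have "restrict f (V - {v}) \<in> P"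
      using f proper_upd[of "restrict f (V - {v})"] unfolding P_def by simp
    with f_eq show "f \<in> (\<lambda>g. g(v := k)) ` P" by (rule image_eqI)
  qed
  ultimately show ?thesis
    using card_image unfolding chromatic_poly_def P_def by fastforce
qed

lemma unique_top_colourings_eq_sum:
  assumes hg: "hypergraph V E"
  shows "unique_top_colourings V E k = (\<Sum>v\<in>V. chromatic_poly (V - {v}) {e \<in> E. v \<notin> e} k)"
proof -
  define T where "T v = {f \<in> V \<rightarrow>\<^sub>E {..k}. proper_colouring E f \<and> {u \<in> V. f u = k} = {v}}" for v
  have fin: "finite V" using hg by (simp add: hypergraph_def)
  have "{f \<in> V \<rightarrow>\<^sub>E {..k}. proper_colouring E f \<and> colour_classes V f k = 1} = (\<Union>v\<in>V. T v)"
    by (auto simp: T_def colour_classes_def card_1_singleton_iff)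
  moreover have "finite (T v)" for v
    unfolding T_def by (rule finite_subset[of _ "V \<rightarrow>\<^sub>E {..k}"]) (auto simp: fin finite_PiE)
  moreover have "\<forall>v\<in>V. \<forall>w\<in>V. v \<noteq> w \<longrightarrow> T v \<inter> T w = {}"
    by (auto simp: T_def)
  ultimately have "unique_top_colourings V E k = (\<Sum>v\<in>V. card (T v))"
    unfolding unique_top_colourings_def by (simp add: card_UN_disjoint[OF fin])
  also have "\<dots> = (\<Sum>v\<in>V. chromatic_poly (V - {v}) {e \<in> E. v \<notin> e} k)"
    unfolding T_def by (intro sum.cong refl card_colourings_top_colour_at[OF hg])
  finally show ?thesis .
qed

section \<open>Polynomial identities\<close>

lemma poly_eq_if_agree_on_infinite:
  fixes p q :: "'a :: idom poly"
  assumes "infinite Y" "\<forall>y\<in>Y. poly p y = poly q y"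
  shows "p = q"
proof (rule ccontr)
  assume "p \<noteq> q"
  then have "finite {y. poly (p - q) y = 0}" by (intro poly_roots_finite) simp
  moreover have "Y \<subseteq> {y. poly (p - q) y = 0}" using assms(2) by auto
  ultimately show False using assms(1) finite_subset by blast
qed

lemma order_power: "p \<noteq> 0 \<Longrightarrow> order x (p ^ n) = n * order x p"
  by (induction n) (simp_all add: order_mult)

lemma order_one_monom_minus_one:
  assumes "a \<ge> 1"
  shows "order 1 (monom (1 :: 'a :: {idom, ring_char_0}) a - 1) = 1"
proof -
  define r :: "'a poly" where "r = (\<Sum>i<a. monom 1 i)"
  have factor: "monom 1 a - 1 = [:-1, 1:] * r"
    by (simp flip: poly_eq_poly_eq_iff
        add: fun_eq_iff r_def poly_monom poly_sum power_diff_1_eq algebra_simps)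
  have "poly r 1 = of_nat a" by (simp add: r_def poly_sum poly_monom)
  then have "r \<noteq> 0" "order 1 r = 0" using assms by (auto intro: order_0I)
  moreover have "[:-1, 1:] * r \<noteq> 0" using \<open>r \<noteq> 0\<close> by (simp only: mult_eq_0_iff) simp
  ultimately show ?thesis
    unfolding factor using order_mult[of "[:-1, 1:]" r 1] order_power_n_n[of 1 1] by simp
qed

text \<open>c and m are the multiplicities of the roots 0 and 1 of x^c (x^a - 1)^m.\<close>
lemma exponents_eq_if_pow_mult_pow_minus_one_eq:
  fixes a b c c' m m' :: nat
  assumes "a \<ge> 1" "b \<ge> 1"
    and eq: "\<And>k :: nat. k \<ge> 1 \<Longrightarrow> k ^ c * (k ^ a - 1) ^ m = k ^ c' * (k ^ b - 1) ^ m'"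
  shows "c = c'" "m = m'" "m \<noteq> 0 \<Longrightarrow> a = b"
proof -
  define P :: "nat \<Rightarrow> nat \<Rightarrow> nat \<Rightarrow> real poly"
    where "P c a m = [:0, 1:] ^ c * (monom 1 a - 1) ^ m" for c a m
  have poly_P: "poly (P c a m) (real k) = real (k ^ c * (k ^ a - 1) ^ m)" if "k \<ge> 1" for c a m k
    using that by (simp add: P_def poly_monom of_nat_diff)
  have nonzero: "monom (1 :: real) a - 1 \<noteq> 0" if "a \<ge> 1" for a
  proof
    assume "monom (1 :: real) a - 1 = 0"
    then have "poly (monom (1 :: real) a - 1) 0 = 0" by simp
    with that show False by (simp add: poly_monom power_0_left)
  qed
  have order0: "order 0 (P c a m) = c" if "a \<ge> 1" for c a m
  proof -
    have "poly ((monom (1 :: real) a - 1) ^ m) 0 \<noteq> 0"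
      using that by (simp add: poly_monom power_0_left)
    then show ?thesis
      using order_power_n_n[of 0 c] nonzero[OF that]
      by (simp add: P_def order_mult order_0I)
  qed
  have order1: "order 1 (P c a m) = m" if "a \<ge> 1" for c a m
    using order_power[OF nonzero[OF that], of 1 m] nonzero[OF that]
      order_one_monom_minus_one[OF that, where 'a = real]
    by (simp add: P_def order_mult order_0I)
  have "P c a m = P c' b m'"
  proof (rule poly_eq_if_agree_on_infinite)
    show "infinite (real ` {1..})"
      using infinite_Ici[of "1 :: nat"] by (simp add: finite_image_iff)
    show "\<forall>y\<in>real ` {1..}. poly (P c a m) y = poly (P c' b m') y"
    proof
      fix y assume "y \<in> real ` {1..}"
      then obtain k where "k \<ge> 1" "y = real k" by auto
      then show "poly (P c a m) y = poly (P c' b m') y"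
        using poly_P[where k = k] eq[of k] by (simp only:)
    qed
  qed
  then show "c = c'" "m = m'"
    using order0[OF assms(1), of c m] order0[OF assms(2), of c' m']
      order1[OF assms(1), of c m] order1[OF assms(2), of c' m'] by simp_all
  assume "m \<noteq> 0"
  have "(2 ^ a - 1) ^ m = ((2 :: nat) ^ b - 1) ^ m"
    using eq[of 2] \<open>c = c'\<close> \<open>m = m'\<close> by simp
  then have "(2 :: nat) ^ a - 1 = 2 ^ b - 1"
    using \<open>m \<noteq> 0\<close> by (simp add: power_eq_iff_eq_base)
  moreover have "(1 :: nat) \<le> 2 ^ a" "(1 :: nat) \<le> 2 ^ b" by simp_all
  ultimately have "(2 :: nat) ^ a = 2 ^ b" by linarith
  then show "a = b" by simp
qed

lemma count_image_mset_mset_set: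
  "finite A \<Longrightarrow> count (image_mset f (mset_set A)) j = card {x \<in> A. f x = j}"
  by (simp add: count_image_mset Int_commute vimage_def Int_def conj_commute)

lemma image_mset_eq_if_power_sums_eq:
  fixes f :: "'a \<Rightarrow> nat" and g :: "'b \<Rightarrow> nat"
  assumes fin: "finite A" "finite B" and "infinite Y"
    and sums: "\<And>y. y \<in> Y \<Longrightarrow> (\<Sum>x\<in>A. y ^ f x) = (\<Sum>x\<in>B. (y :: real) ^ g x)"
  shows "image_mset f (mset_set A) = image_mset g (mset_set B)"
proof (rule multiset_eqI)
  fix j
  have "(\<Sum>x\<in>A. monom (1 :: real) (f x)) = (\<Sum>x\<in>B. monom 1 (g x))"
    using \<open>infinite Y\<close> by (rule poly_eq_if_agree_on_infinite) (simp add: poly_sum poly_monom sums)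
  then have "coeff (\<Sum>x\<in>A. monom (1 :: real) (f x)) j = coeff (\<Sum>x\<in>B. monom 1 (g x)) j"
    by simp
  then have "card {x \<in> A. f x = j} = card {x \<in> B. g x = j}"
    using fin by (simp add: coeff_sum coeff_monom sum.If_cases Int_def)
  then show "count (image_mset f (mset_set A)) j = count (image_mset g (mset_set B)) j"
    using fin by (simp add: count_image_mset_mset_set)
qed

section \<open>Recovering the degrees\<close>

lemma unique_top_colourings_hyperforest:
  assumes forest: "hyperforest V E" and uni: "uniform s E"
  shows "unique_top_colourings V E k = (\<Sum>v\<in>V.
    k ^ (card V - 1 - (s - 1) * (card E - Defs.degree E v))
      * (k ^ (s - 1) - 1) ^ (card E - Defs.degree E v))"
proof -
  have hg: "hypergraph V E" and "finite E"
    using forest hyperforest_finite_edges by (auto simp: hyperforest_def)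
  have "chromatic_poly (V - {v}) {e \<in> E. v \<notin> e} k
      = k ^ (card V - 1 - (s - 1) * (card E - Defs.degree E v))
        * (k ^ (s - 1) - 1) ^ (card E - Defs.degree E v)"
    if "v \<in> V" for v
  proof -
    have "hyperforest (V - {v}) {e \<in> E. v \<notin> e}"
      using hg by (intro hyperforest_subgraph[OF forest]) (auto simp: hypergraph_def)
    moreover have "uniform s {e \<in> E. v \<notin> e}" using uni by (simp add: uniform_def)
    moreover have "{e \<in> E. v \<notin> e} = E - {e \<in> E. v \<in> e}" by blast
    then have "card {e \<in> E. v \<notin> e} = card E - Defs.degree E v"
      using \<open>finite E\<close> by (simp add: card_Diff_subset Defs.degree_def)
    moreover have "card (V - {v}) = card V - 1" using that by simp
    ultimately show ?thesis by (simp add: chromatic_poly_hyperforest)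
  qed
  then show ?thesis by (simp add: unique_top_colourings_eq_sum[OF hg])
qed

text \<open>Dividing by (t - 1)^m turns t^d (t - 1)^(m - d) into y^d with y = t / (t - 1).\<close>
lemma pow_mult_pow_minus_one_eq:
  fixes x :: real
  assumes "x ^ a \<noteq> 1" "d \<le> m"
  shows "x ^ (n + a * d) * (x ^ a - 1) ^ (m - d)
    = x ^ n * (x ^ a - 1) ^ m * (x ^ a / (x ^ a - 1)) ^ d"
proof -
  have "(x ^ a - 1) ^ m = (x ^ a - 1) ^ (m - d) * (x ^ a - 1) ^ d"
    using assms(2) by (simp flip: power_add)
  then show ?thesis
    using assms(1) by (simp add: power_add power_mult power_divide field_simps)
qed

lemma real_unique_top_colourings_hyperforest:
  assumes forest: "hyperforest V E" and uni: "uniform s E" and "s \<ge> 2" "k \<ge> 2"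
  defines "t \<equiv> real k ^ (s - 1)"
  shows "real (unique_top_colourings V E k) = real k ^ (card V - 1 - (s - 1) * card E)
      * (t - 1) ^ card E * (\<Sum>v\<in>V. (t / (t - 1)) ^ Defs.degree E v)"
proof -
  have "t > 1" unfolding t_def using assms(3,4) by (simp add: one_less_power)
  have "finite E" using forest by (rule hyperforest_finite_edges)
  have "real (k ^ (card V - 1 - (s - 1) * (card E - Defs.degree E v))
        * (k ^ (s - 1) - 1) ^ (card E - Defs.degree E v))
      = real k ^ (card V - 1 - (s - 1) * card E) * (t - 1) ^ card E
        * (t / (t - 1)) ^ Defs.degree E v"
    if "v \<in> V" for v
  proof -
    have d: "Defs.degree E v \<le> card E"
      unfolding Defs.degree_def using \<open>finite E\<close> by (simp add: card_mono)
    have "(s - 1) * card E < card V"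
      using hyperforest_card_edges_less[OF forest uni] that by blast
    then have "card V - 1 - (s - 1) * (card E - Defs.degree E v)
        = (card V - 1 - (s - 1) * card E) + (s - 1) * Defs.degree E v"
      using d by (simp add: diff_mult_distrib2 mult_le_mono2)
    moreover have "real (k ^ (s - 1) - 1) = t - 1"
      unfolding t_def using assms(4) by (simp add: of_nat_diff)
    ultimately show ?thesis
      using pow_mult_pow_minus_one_eq[of "real k" "s - 1" "Defs.degree E v" "card E"] d \<open>t > 1\<close>
      by (simp add: t_def)
  qed
  then show ?thesis
    by (simp add: unique_top_colourings_hyperforest[OF forest uni] sum_distrib_left)
qed

lemma degree_power_sums_eq_if_unique_top_colourings_eq:
  assumes forests: "hyperforest V E" "hyperforest V' E'" and uni: "uniform s E" "uniform s E'"
    and "s \<ge> 2" "k \<ge> 2" and edges: "card E = card E'"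
    and vertices: "card V - (s - 1) * card E = card V' - (s - 1) * card E'"
    and top: "unique_top_colourings V E k = unique_top_colourings V' E' k"
  defines "t \<equiv> real k ^ (s - 1)"
  shows "(\<Sum>v\<in>V. (t / (t - 1)) ^ Defs.degree E v) = (\<Sum>v\<in>V'. (t / (t - 1)) ^ Defs.degree E' v)"
proof -
  define C where "C = real k ^ (card V - 1 - (s - 1) * card E) * (t - 1) ^ card E"
  have "t > 1" unfolding t_def using \<open>s \<ge> 2\<close> \<open>k \<ge> 2\<close> by (simp add: one_less_power)
  then have "C \<noteq> 0" using \<open>k \<ge> 2\<close> by (simp add: C_def)
  have "card V - 1 - (s - 1) * card E = card V' - 1 - (s - 1) * card E'"
    using vertices unfolding edges by linarith
  then have C': "C = real k ^ (card V' - 1 - (s - 1) * card E') * (t - 1) ^ card E'"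
    by (simp add: C_def edges)
  have "C * (\<Sum>v\<in>V. (t / (t - 1)) ^ Defs.degree E v) = real (unique_top_colourings V E k)"
    unfolding C_def t_def
    by (rule real_unique_top_colourings_hyperforest[OF forests(1) uni(1) \<open>s \<ge> 2\<close> \<open>k \<ge> 2\<close>,
          symmetric])
  also have "\<dots> = real (unique_top_colourings V' E' k)" using top by simp
  also have "\<dots> = C * (\<Sum>v\<in>V'. (t / (t - 1)) ^ Defs.degree E' v)"
    unfolding C' t_def
    by (rule real_unique_top_colourings_hyperforest[OF forests(2) uni(2) \<open>s \<ge> 2\<close> \<open>k \<ge> 2\<close>])
  finally have "C * (\<Sum>v\<in>V. (t / (t - 1)) ^ Defs.degree E v)
      = C * (\<Sum>v\<in>V'. (t / (t - 1)) ^ Defs.degree E' v)" .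
  with \<open>C \<noteq> 0\<close> show ?thesis by simp
qed

lemma infinite_image_pow_ratio:
  assumes "a \<ge> 1"
  shows "infinite ((\<lambda>k :: nat. real k ^ a / (real k ^ a - 1)) ` {2..})"
proof -
  have "inj_on (\<lambda>k :: nat. real k ^ a / (real k ^ a - 1)) {2..}"
  proof
    fix k l :: nat assume "k \<in> {2..}" "l \<in> {2..}"
    then have "real k ^ a > 1" "real l ^ a > 1" using assms by (simp_all add: one_less_power)
    moreover assume "real k ^ a / (real k ^ a - 1) = real l ^ a / (real l ^ a - 1)"
    ultimately have "real k ^ a = real l ^ a" by (simp add: frac_eq_eq algebra_simps)
    then show "k = l" using assms by (simp add: power_eq_iff_eq_base)
  qed
  then show ?thesis using infinite_Ici[of "2 :: nat"] finite_imageD by blast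
qed

lemma hyperforest_sizes_eq_if_chromatic_poly_eq:
  assumes forests: "hyperforest V E" "hyperforest V' E'" and uni: "uniform s E" "uniform s' E'"
    and "s \<ge> 2" "s' \<ge> 2" and chi: "\<And>k. chromatic_poly V E k = chromatic_poly V' E' k"
  shows "card E = card E'" "card V - (s - 1) * card E = card V' - (s - 1) * card E'" "uniform s E'"
proof -
  have "k ^ (card V - (s - 1) * card E) * (k ^ (s - 1) - 1) ^ card E
      = k ^ (card V' - (s' - 1) * card E') * (k ^ (s' - 1) - 1) ^ card E'" for k :: nat
    using chi by (simp add: chromatic_poly_hyperforest[OF forests(1) uni(1)]
        chromatic_poly_hyperforest[OF forests(2) uni(2)])
  moreover have "s - 1 \<ge> 1" "s' - 1 \<ge> 1" using \<open>s \<ge> 2\<close> \<open>s' \<ge> 2\<close> by simp_all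
  ultimately have vertices: "card V - (s - 1) * card E = card V' - (s' - 1) * card E'"
    and edges: "card E = card E'" and same_s: "card E \<noteq> 0 \<Longrightarrow> s - 1 = s' - 1"
    using exponents_eq_if_pow_mult_pow_minus_one_eq by blast+
  show "card E = card E'" by (fact edges)
  have "uniform s E' \<and> card V - (s - 1) * card E = card V' - (s - 1) * card E'"
  proof (cases "E' = {}")
    case False
    then have "card E \<noteq> 0" using edges hyperforest_finite_edges[OF forests(2)] by simp
    then have "s = s'" using same_s \<open>s \<ge> 2\<close> \<open>s' \<ge> 2\<close> by linarith
    with uni(2) vertices show ?thesis by simp
  qed (use vertices edges in \<open>simp add: uniform_def\<close>)
  then show "card V - (s - 1) * card E = card V' - (s - 1) * card E'" "uniform s E'" by simp_all
qed

lemma degree_mset_eq_if_unique_top_colourings_eq: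
  assumes forests: "hyperforest V E" "hyperforest V' E'" and uni: "uniform s E" "uniform s E'"
    and "s \<ge> 2" and edges: "card E = card E'"
    and vertices: "card V - (s - 1) * card E = card V' - (s - 1) * card E'"
    and top: "\<And>k. unique_top_colourings V E k = unique_top_colourings V' E' k"
  shows "image_mset (Defs.degree E) (mset_set V) = image_mset (Defs.degree E') (mset_set V')"
proof (rule image_mset_eq_if_power_sums_eq)
  show "finite V" "finite V'" using forests by (simp_all add: hyperforest_def hypergraph_def)
  show "infinite ((\<lambda>k :: nat. real k ^ (s - 1) / (real k ^ (s - 1) - 1)) ` {2..})"
    using \<open>s \<ge> 2\<close> by (intro infinite_image_pow_ratio) simp
  fix y assume "y \<in> (\<lambda>k :: nat. real k ^ (s - 1) / (real k ^ (s - 1) - 1)) ` {2..}"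
  then obtain k where "k \<ge> 2" "y = real k ^ (s - 1) / (real k ^ (s - 1) - 1)" by auto
  then show "(\<Sum>v\<in>V. y ^ Defs.degree E v) = (\<Sum>v\<in>V'. y ^ Defs.degree E' v)"
    using degree_power_sums_eq_if_unique_top_colourings_eq
        [OF forests uni \<open>s \<ge> 2\<close> _ edges vertices top]
    by simp
qed

theorem proposition4p3:
  fixes V :: "'a set" and E :: "'a set set" and V' :: "'b set" and E' :: "'b set set"
    and s s' :: nat
  assumes "hypertree V E" and "s \<ge> 2" and "uniform s E"
    and "hypertree V' E'" and "s' \<ge> 2" and "uniform s' E'"
    and "csf V E = csf V' E'"
  shows "degree_sequence V E = degree_sequence V' E'"
proof -
  have forests: "hyperforest V E" "hyperforest V' E'"
    using assms(1,4) by (simp_all add: hypertree_imp_hyperforest)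
  then have fin: "finite V" "finite V'" by (simp_all add: hyperforest_def hypergraph_def)
  have "chromatic_poly V E k = chromatic_poly V' E' k" for k
    using card_colourings_eq_if_csf_eq[OF assms(7) fin, of "{..<k}" "\<lambda>_. True"]
    by (simp add: chromatic_poly_def)
  note sizes = hyperforest_sizes_eq_if_chromatic_poly_eq[OF forests assms(3,6,2,5) this]
  have "unique_top_colourings V E k = unique_top_colourings V' E' k" for k
    using card_colourings_eq_if_csf_eq[OF assms(7) fin, of "{..k}" "\<lambda>\<alpha>. \<alpha> k = 1"]
    by (simp add: unique_top_colourings_def)
  then have "image_mset (Defs.degree E) (mset_set V) = image_mset (Defs.degree E') (mset_set V')"
    using degree_mset_eq_if_unique_top_colourings_eq
        [OF forests assms(3) sizes(3) assms(2) sizes(1,2)]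
    by blast
  then show ?thesis by (simp add: degree_sequence_def)
qed

end
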